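(* The zero-error capacity of the $(w,d)$ sliding-window symmetric channel over $\mathbb{Z}_q$ satisfies $$1-\frac{1}{w}\log_q V^w_{2d}(q)\ \le\ C_0\ \le\ 1-\frac{d}{w}\log_q(q-1).$$ Moreover, if $d\ge w/2$ then $C_0=0$.
   Context: $V^n_r(q)=\sum_{i=0}^{\min(r,n)}\binom{n}{i}(q-1)^i$. Integers $w\ge1$, $0\le d\le w$, $q\ge2$. The $(w,d)$ sliding-window symmetric channel has input and output alphabet $\mathbb{Z}_q$; a noise word $v(0:n-1)\in\mathbb{Z}_q^n$ is admissible if for some initial pattern $v(-w:-1)\in\mathbb{Z}_q^w$ every $w$ consecutive entries of $(v(-w),\dots,v(n-1))$ contain at most $d$ nonzero entries; the output is $y(t)=x(t)+v(t)\bmod q$. A zero-error code of length $n$ is a set $\mathcal{F}\subseteq\mathbb{Z}_q^n$ such that no output word can be produced by two distinct codewords under admissible noise; $C_0=\sup_n\sup_{\mathcal{F}}\log_q|\mathcal{F}|/n$. *)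

theory Defs
  imports Complex_Main
begin

definition words :: "nat \<Rightarrow> nat \<Rightarrow> nat list set" where
  "words q n = {xs. length xs = n \<and> set xs \<subseteq> {..<q}}"

definition V :: "nat \<Rightarrow> nat \<Rightarrow> nat \<Rightarrow> nat" where
  "V n r q = (\<Sum>i = 0..min r n. (n choose i) * (q - 1) ^ i)"

definition window_ok :: "nat \<Rightarrow> nat \<Rightarrow> nat list \<Rightarrow> bool" where
  "window_ok w d s = (\<forall>i. i + w \<le> length s \<longrightarrow>
      length (filter (\<lambda>a. a \<noteq> 0) (take w (drop i s))) \<le> d)"

text \<open>Admissible noise word of length n: some initial pattern v(-w..-1) exists.\<close>
definition admissible :: "nat \<Rightarrow> nat \<Rightarrow> nat \<Rightarrow> nat \<Rightarrow> nat list \<Rightarrow> bool" where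
  "admissible q w d n v = (v \<in> words q n \<and>
      (\<exists>u \<in> words q w. window_ok w d (u @ v)))"

definition channel_out :: "nat \<Rightarrow> nat list \<Rightarrow> nat list \<Rightarrow> nat list" where
  "channel_out q x v = map2 (\<lambda>a b. (a + b) mod q) x v"

definition zero_error_code :: "nat \<Rightarrow> nat \<Rightarrow> nat \<Rightarrow> nat \<Rightarrow> nat list set \<Rightarrow> bool" where
  "zero_error_code q w d n F = (F \<subseteq> words q n \<and>
     (\<forall>x1 \<in> F. \<forall>x2 \<in> F. x1 \<noteq> x2 \<longrightarrow>
        \<not> (\<exists>v1 v2. admissible q w d n v1 \<and> admissible q w d n v2 \<and>
              channel_out q x1 v1 = channel_out q x2 v2)))"

definition C0 :: "nat \<Rightarrow> nat \<Rightarrow> nat \<Rightarrow> real" where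
  "C0 q w d = (SUP n \<in> {1..}. SUP F \<in> {F. F \<noteq> {} \<and> zero_error_code q w d n F}.
                  log (real q) (real (card F)) / real n)"

end

(*
  Upper bound: a noise word whose nonzero entries lie at positions t with t mod w in a
  set of at most d residues is admissible, starting from the all-zero initial pattern.
  Two codewords that agree at every position with t mod w \<ge> d are therefore confusable:
  the noise can move the first onto the second.  So projecting onto those positions is
  injective on a zero-error code, which gives C0 \<le> 1 - d/w, a bound at least as strong
  as the stated one because log_q (q - 1) \<le> 1.  If d \<ge> w/2, the residues below d and
  those from d on both have at most d elements, so any two words are confusable.

  Lower bound: an admissible noise word of length w has weight at most d, so a code of
  length w with minimum Hamming distance > 2d is zero-error; a maximal such code covers
  all q^w words by Hamming balls of radius 2d (Gilbert-Varshamov).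
*)

theory Submission
  imports Defs "HOL-Number_Theory.Cong"
begin

lemma finite_words: "finite (words q n)"
  unfolding words_def using finite_lists_length_eq[of "{..<q}" n] by (simp add: conj_commute)

lemma card_words: "card (words q n) = q ^ n"
  unfolding words_def using card_lists_length_eq[of "{..<q}" n] by (simp add: conj_commute)

lemma words_iff_nth: "xs \<in> words q n \<longleftrightarrow> length xs = n \<and> (\<forall>t<n. xs ! t < q)"
  by (auto simp: words_def set_conv_nth)

lemma replicate_zero_in_words: "q \<ge> 1 \<Longrightarrow> replicate n 0 \<in> words q n"
  by (auto simp: words_def)

lemma channel_out_nth:
  "t < length x \<Longrightarrow> t < length v \<Longrightarrow> channel_out q x v ! t = (x ! t + v ! t) mod q"
  by (simp add: channel_out_def)

lemma finite_zero_error_code: "zero_error_code q w d n F \<Longrightarrow> finite F"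
  unfolding zero_error_code_def using finite_subset[OF _ finite_words] by blast

lemma zero_error_code_card_bounds:
  assumes "zero_error_code q w d n F" "F \<noteq> {}"
  shows "1 \<le> card F" "card F \<le> q ^ n"
proof -
  show "1 \<le> card F"
    using finite_zero_error_code[OF assms(1)] assms(2) by (simp add: Suc_le_eq card_gt_0_iff)
  have "F \<subseteq> words q n" using assms(1) by (simp add: zero_error_code_def)
  then show "card F \<le> q ^ n" using card_mono[OF finite_words] by (fastforce simp: card_words)
qed

lemma singleton_zero_error_code: "q \<ge> 1 \<Longrightarrow> zero_error_code q w d n {replicate n 0}"
  by (simp add: zero_error_code_def replicate_zero_in_words)

lemma card_rotate_mod:
  fixes w :: nat
  shows "card {k. k < w \<and> P ((i + k) mod w)} = card {m. m < w \<and> P m}"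
proof (cases "w = 0")
  case False
  let ?f = "\<lambda>k. (i + k) mod w"
  have inj: "inj_on ?f {..<w}"
    by (rule inj_onI) (metis cong_add_lcancel_nat cong_def lessThan_iff mod_less)
  have onto: "?f ` {..<w} = {..<w}"
    using False inj by (intro endo_inj_surj) auto
  have "card {k. k < w \<and> P (?f k)} = card (?f ` {k. k < w \<and> P (?f k)})"
    by (rule card_image[symmetric], rule inj_on_subset[OF inj]) auto
  also have "?f ` {k. k < w \<and> P (?f k)} = ?f ` {..<w} \<inter> {m. P m}"
    by auto
  also have "\<dots> = {m. m < w \<and> P m}"
    unfolding onto by auto
  finally show ?thesis .
qed simp

lemma card_mod_block:
  fixes n w :: nat
  shows "card {t. t < n + w \<and> P (t mod w)} = card {t. t < n \<and> P (t mod w)} + card {m. m < w \<and> P m}"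
proof -
  have split: "{t. t < n + w \<and> P (t mod w)}
      = {t. t < n \<and> P (t mod w)} \<union> (+) n ` {k. k < w \<and> P ((n + k) mod w)}"
  proof (intro set_eqI iffI)
    fix t assume t: "t \<in> {t. t < n + w \<and> P (t mod w)}"
    show "t \<in> {t. t < n \<and> P (t mod w)} \<union> (+) n ` {k. k < w \<and> P ((n + k) mod w)}"
    proof (cases "t < n")
      case False
      then have "t - n \<in> {k. k < w \<and> P ((n + k) mod w)}" using t by auto
      then have "n + (t - n) \<in> (+) n ` {k. k < w \<and> P ((n + k) mod w)}" by (rule imageI)
      then show ?thesis using False by simp
    qed (use t in simp)
  qed auto
  show ?thesis
    unfolding split by (subst card_Un_disjoint) (auto simp: card_image card_rotate_mod)
qed

lemma card_mod_ge_mult_le: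
  fixes n w d :: nat
  assumes "0 < w" and "d \<le> w"
  shows "card {t. t < n \<and> d \<le> t mod w} * w \<le> n * (w - d)"
proof (induction n rule: less_induct)
  case (less n)
  show ?case
  proof (cases "n < w")
    case True
    then have "{t. t < n \<and> d \<le> t mod w} = {d..<n}" by auto
    then have "card {t. t < n \<and> d \<le> t mod w} * w = n * w - d * w"
      by (simp add: diff_mult_distrib)
    also have "\<dots> \<le> n * w - n * d" using True assms(2) by (intro diff_le_mono2) simp
    also have "\<dots> = n * (w - d)" by (simp add: diff_mult_distrib2)
    finally show ?thesis .
  next
    case False
    then obtain m where m: "n = m + w" by (metis add.commute le_add_diff_inverse not_less)
    have "{k. k < w \<and> d \<le> k} = {d..<w}" by auto
    then have "card {k. k < w \<and> d \<le> k} = w - d" by simp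
    moreover have "card {t. t < m \<and> d \<le> t mod w} * w \<le> m * (w - d)"
      using less.IH m assms(1) by simp
    ultimately show ?thesis
      unfolding m card_mod_block by (simp add: algebra_simps)
  qed
qed

lemma card_less_both_le: "card {m. m < w \<and> m < (d::nat)} \<le> d"
  by (rule le_trans[OF card_mono[of "{..<d}"]]) auto

text \<open>Every window of the padded word meets each residue class mod w exactly once.\<close>

lemma admissible_if_periodic_support:
  assumes v: "v \<in> words q n" and q: "q \<ge> 1"
    and support: "\<forall>t<n. v ! t \<noteq> 0 \<longrightarrow> Q (t mod w)"
    and Q: "card {m. m < w \<and> Q m} \<le> d"
  shows "admissible q w d n v"
  unfolding admissible_def
proof (intro conjI bexI)
  let ?s = "replicate w 0 @ v"
  have lv: "length v = n" using v by (simp add: words_def)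
  show "window_ok w d ?s"
    unfolding window_ok_def
  proof (intro allI impI)
    fix i assume i: "i + w \<le> length ?s"
    let ?win = "take w (drop i ?s)"
    have "{k. k < w \<and> ?win ! k \<noteq> 0} \<subseteq> {k. k < w \<and> Q ((i + k) mod w)}"
    proof
      fix k assume "k \<in> {k. k < w \<and> ?win ! k \<noteq> 0}"
      then have k: "k < w" and "?win ! k \<noteq> 0" by auto
      moreover have "?win ! k = ?s ! (i + k)"
        using k i by (subst nth_take[OF k], subst nth_drop) auto
      ultimately have "?s ! (i + k) \<noteq> 0" by simp
      then have ge: "w \<le> i + k" and "v ! (i + k - w) \<noteq> 0"
        by (auto simp: nth_append split: if_splits)
      moreover have "i + k - w < n" using i k lv ge by simp
      ultimately have "Q ((i + k - w) mod w)" using support by blast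
      then show "k \<in> {k. k < w \<and> Q ((i + k) mod w)}"
        using k ge by (metis (no_types, lifting) le_add_diff_inverse2 mem_Collect_eq mod_add_self2)
    qed
    then have "card {k. k < w \<and> ?win ! k \<noteq> 0} \<le> card {k. k < w \<and> Q ((i + k) mod w)}"
      by (rule card_mono[rotated]) simp
    also have "\<dots> \<le> d"
      using Q by (simp add: card_rotate_mod)
    finally have "card {k. k < w \<and> ?win ! k \<noteq> 0} \<le> d" .
    moreover have "length ?win = w" using i by simp
    ultimately show "length (filter (\<lambda>a. a \<noteq> 0) ?win) \<le> d"
      by (simp only: length_filter_conv_card)
  qed
qed (use v q in \<open>simp_all add: replicate_zero_in_words\<close>)

lemma add_mod_sub_mod:
  fixes a b q :: nat
  assumes "a < q" "b < q"
  shows "(a + (b + q - a) mod q) mod q = b"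
proof -
  have "(a + (b + q - a) mod q) mod q = (b + q) mod q"
    using assms by (simp add: mod_add_right_eq)
  then show ?thesis using assms by simp
qed

text \<open>The noise v1 moves x1 onto x2 at the positions with residue in Q, and v2 moves x2 onto
  x1 at all other positions where they differ.\<close>

lemma confusable_if_differences_covered:
  assumes x: "x1 \<in> words q n" "x2 \<in> words q n" and q: "q \<ge> 1"
    and Q: "card {m. m < w \<and> Q m} \<le> d" and R: "card {m. m < w \<and> R m} \<le> d"
    and differ: "\<forall>t<n. x1 ! t \<noteq> x2 ! t \<longrightarrow> Q (t mod w) \<or> R (t mod w)"
  shows "\<exists>v1 v2. admissible q w d n v1 \<and> admissible q w d n v2
           \<and> channel_out q x1 v1 = channel_out q x2 v2"
proof (intro exI conjI)
  define shift where "shift a b = (b + q - a) mod q" for a b :: nat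
  define v1 where "v1 = map (\<lambda>t. if Q (t mod w) then shift (x1 ! t) (x2 ! t) else 0) [0..<n]"
  define v2 where "v2 = map (\<lambda>t. if Q (t mod w) then 0 else shift (x2 ! t) (x1 ! t)) [0..<n]"
  have len: "length x1 = n" "length x2 = n" "length v1 = n" "length v2 = n"
    using x by (simp_all add: words_iff_nth v1_def v2_def)
  have lt: "x1 ! t < q" "x2 ! t < q" if "t < n" for t
    using x that by (simp_all add: words_iff_nth)
  show "admissible q w d n v1"
    using q Q by (intro admissible_if_periodic_support) (auto simp: words_iff_nth v1_def shift_def)
  show "admissible q w d n v2"
    using q R differ by (intro admissible_if_periodic_support) (auto simp: words_iff_nth v2_def shift_def)
  show "channel_out q x1 v1 = channel_out q x2 v2"
  proof (rule nth_equalityI)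
    show "length (channel_out q x1 v1) = length (channel_out q x2 v2)"
      using len by (simp add: channel_out_def)
  next
    fix t assume "t < length (channel_out q x1 v1)"
    then have t: "t < n" using len by (simp add: channel_out_def)
    then show "channel_out q x1 v1 ! t = channel_out q x2 v2 ! t"
      using len lt[OF t] by (simp add: channel_out_nth v1_def v2_def shift_def add_mod_sub_mod)
  qed
qed

lemma zero_error_code_differ_outside:
  assumes F: "zero_error_code q w d n F" and q: "q \<ge> 1"
    and x: "x1 \<in> F" "x2 \<in> F" "x1 \<noteq> x2"
    and Q: "card {m. m < w \<and> Q m} \<le> d" and R: "card {m. m < w \<and> R m} \<le> d"
  shows "\<exists>t<n. x1 ! t \<noteq> x2 ! t \<and> \<not> Q (t mod w) \<and> \<not> R (t mod w)"
proof (rule ccontr)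
  assume "\<not> ?thesis"
  then have differ: "\<forall>t<n. x1 ! t \<noteq> x2 ! t \<longrightarrow> Q (t mod w) \<or> R (t mod w)" by blast
  have "x1 \<in> words q n" "x2 \<in> words q n" using F x by (auto simp: zero_error_code_def)
  from confusable_if_differences_covered[OF this q Q R differ]
  show False using F x unfolding zero_error_code_def by blast
qed

lemma nth_eq_if_nths_eq:
  assumes "length xs = length ys" "nths xs I = nths ys I" "i < length xs" "i \<in> I"
  shows "xs ! i = ys ! i"
  using assms
proof (induction xs ys arbitrary: I i rule: list_induct2)
  case (Cons x xs y ys)
  then show ?case
    by (cases i) (auto simp: nths_Cons split: if_splits)
qed simp

lemma zero_error_code_card_le:
  assumes F: "zero_error_code q w d n F" and q: "q \<ge> 1"
  shows "card F \<le> q ^ card {t. t < n \<and> d \<le> t mod w}"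
proof -
  let ?U = "{t. d \<le> t mod w}"
  let ?projections = "{xs. set xs \<subseteq> {..<q} \<and> length xs = card {t. t < n \<and> d \<le> t mod w}}"
  have FW: "F \<subseteq> words q n" using F by (simp add: zero_error_code_def)
  have "inj_on (\<lambda>x. nths x ?U) F"
  proof (rule inj_onI, rule ccontr)
    fix x1 x2 assume x: "x1 \<in> F" "x2 \<in> F" "nths x1 ?U = nths x2 ?U" "x1 \<noteq> x2"
    obtain t where "t < n" "x1 ! t \<noteq> x2 ! t" "d \<le> t mod w"
      using zero_error_code_differ_outside[OF F q x(1,2,4) card_less_both_le, of "\<lambda>_. False"]
      by auto
    moreover have "length x1 = n" "length x2 = n" using x FW by (auto simp: words_def)
    ultimately show False using nth_eq_if_nths_eq[OF _ x(3)] by auto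
  qed
  moreover have "(\<lambda>x. nths x ?U) ` F \<subseteq> ?projections"
    using FW set_nths_subset by (fastforce simp: words_def length_nths)
  ultimately have "card F \<le> card ?projections"
    by (intro card_inj_on_le) (auto intro: finite_lists_length_eq)
  then show ?thesis by (simp add: card_lists_length_eq)
qed

lemma zero_error_code_card_le_1:
  assumes F: "zero_error_code q w d n F" and q: "q \<ge> 1" and "w \<le> 2 * d"
  shows "card F \<le> 1"
proof -
  have "{m. m < w \<and> d \<le> m} = {d..<w}" by auto
  then have "card {m. m < w \<and> d \<le> m} \<le> d" using assms(3) by simp
  then have "x1 = x2" if "x1 \<in> F" "x2 \<in> F" for x1 x2
    using zero_error_code_differ_outside[OF F q that _ card_less_both_le] by fastforce
  then show ?thesis using finite_zero_error_code[OF F] by (simp add: card_le_Suc0_iff_eq)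
qed

fun hamming :: "'a list \<Rightarrow> 'a list \<Rightarrow> nat" where
  "hamming (a # xs) (b # ys) = (if a = b then 0 else 1) + hamming xs ys"
| "hamming _ _ = 0"

lemma hamming_self [simp]: "hamming xs xs = 0"
  by (induction xs) auto

lemma hamming_eq_0_iff:
  "length xs = length ys \<Longrightarrow> hamming xs ys = 0 \<longleftrightarrow> xs = ys"
  by (induction xs ys rule: list_induct2) auto

lemma hamming_sym: "hamming xs ys = hamming ys xs"
  by (induction xs ys rule: hamming.induct) auto

lemma hamming_le_noise_weights:
  assumes "length x1 = length x2" "length x2 = length v1" "length v1 = length v2"
    and "set x1 \<subseteq> {..<q}" "set x2 \<subseteq> {..<q}"
    and "channel_out q x1 v1 = channel_out q x2 v2"
  shows "hamming x1 x2 \<le> length (filter (\<lambda>a. a \<noteq> 0) v1) + length (filter (\<lambda>a. a \<noteq> 0) v2)"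
  using assms
proof (induction x1 x2 v1 v2 rule: list_induct4)
  case (Cons a1 x1 a2 x2 b1 v1 b2 v2)
  have "(a1 + b1) mod q = (a2 + b2) mod q" "channel_out q x1 v1 = channel_out q x2 v2"
    using Cons.prems by (simp_all add: channel_out_def)
  moreover have "a1 < q" "a2 < q" using Cons.prems by auto
  ultimately show ?case using Cons.IH Cons.prems by auto
qed simp

lemma admissible_window_length_weight_le:
  assumes "admissible q w d w v"
  shows "length (filter (\<lambda>a. a \<noteq> 0) v) \<le> d"
proof -
  obtain u where u: "u \<in> words q w" and ok: "window_ok w d (u @ v)" and v: "v \<in> words q w"
    using assms unfolding admissible_def by blast
  have "length u = w" "length v = w" using u v by (auto simp: words_def)
  then show ?thesis
    using ok unfolding window_ok_def by (metis append_eq_conv_conj dual_order.refl length_append take_all)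
qed

lemma zero_error_code_if_min_distance:
  assumes F: "F \<subseteq> words q w"
    and far: "\<forall>x1\<in>F. \<forall>x2\<in>F. x1 \<noteq> x2 \<longrightarrow> 2 * d < hamming x1 x2"
  shows "zero_error_code q w d w F"
  unfolding zero_error_code_def
proof (intro conjI F ballI impI notI)
  fix x1 x2 assume x: "x1 \<in> F" "x2 \<in> F" "x1 \<noteq> x2"
  assume "\<exists>v1 v2. admissible q w d w v1 \<and> admissible q w d w v2 \<and>
              channel_out q x1 v1 = channel_out q x2 v2"
  then obtain v1 v2 where a: "admissible q w d w v1" "admissible q w d w v2"
    and out: "channel_out q x1 v1 = channel_out q x2 v2" by blast
  have "x1 \<in> words q w" "x2 \<in> words q w" "v1 \<in> words q w" "v2 \<in> words q w"
    using F x a by (auto simp: admissible_def)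
  then have "hamming x1 x2 \<le> length (filter (\<lambda>a. a \<noteq> 0) v1) + length (filter (\<lambda>a. a \<noteq> 0) v2)"
    using out by (intro hamming_le_noise_weights) (simp_all add: words_def)
  also have "\<dots> \<le> 2 * d"
    using a admissible_window_length_weight_le by (simp add: add_mono mult_2)
  finally show False using far x by force
qed

lemma V_altdef: "V n r q = (\<Sum>i\<le>r. (n choose i) * (q - 1) ^ i)"
  unfolding V_def by (rule sum.mono_neutral_left) auto

lemma V_0_left [simp]: "V 0 r q = 1"
  by (simp add: V_def)

lemma V_0_right [simp]: "V n 0 q = 1"
  by (simp add: V_def)

lemma V_Suc_Suc: "V (Suc n) (Suc r) q = V n (Suc r) q + (q - 1) * V n r q"
proof -
  have pascal: "(\<Sum>i\<le>r. (Suc n choose Suc i) * c ^ Suc i)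
      = (\<Sum>i\<le>r. (n choose Suc i) * c ^ Suc i) + c * (\<Sum>i\<le>r. (n choose i) * c ^ i)" for c :: nat
    by (simp add: sum.distrib sum_distrib_left algebra_simps)
  show ?thesis
    unfolding V_altdef sum.atMost_Suc_shift pascal by simp
qed

definition hamming_ball :: "nat \<Rightarrow> nat \<Rightarrow> nat list \<Rightarrow> nat \<Rightarrow> nat list set" where
  "hamming_ball q n x r = {y \<in> words q n. hamming x y \<le> r}"

lemma finite_hamming_ball: "finite (hamming_ball q n x r)"
  unfolding hamming_ball_def using finite_words by simp

lemma hamming_ball_0:
  assumes "x \<in> words q n"
  shows "hamming_ball q n x 0 \<subseteq> {x}"
proof
  fix y assume "y \<in> hamming_ball q n x 0"
  with assms have "length x = length y" "hamming x y = 0"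
    by (simp_all add: hamming_ball_def words_def)
  then show "y \<in> {x}" by (simp add: hamming_eq_0_iff)
qed

lemma hamming_ball_Cons_subset:
  "hamming_ball q (Suc n) (a # x) (Suc r)
     \<subseteq> (#) a ` hamming_ball q n x (Suc r) \<union> (\<Union>b\<in>{..<q} - {a}. (#) b ` hamming_ball q n x r)"
proof
  fix y assume y: "y \<in> hamming_ball q (Suc n) (a # x) (Suc r)"
  then have "y \<in> words q (Suc n)" by (simp add: hamming_ball_def)
  then obtain b y' where yy: "y = b # y'" and b: "b < q" and y': "y' \<in> words q n"
    by (cases y) (simp_all add: words_def)
  have dist: "(if a = b then 0 else 1) + hamming x y' \<le> Suc r"
    using y yy by (simp add: hamming_ball_def)
  show "y \<in> (#) a ` hamming_ball q n x (Suc r) \<union> (\<Union>b\<in>{..<q} - {a}. (#) b ` hamming_ball q n x r)"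
  proof (cases "b = a")
    case True
    then have "y' \<in> hamming_ball q n x (Suc r)" using dist y' by (simp add: hamming_ball_def)
    then show ?thesis unfolding yy True by (intro UnI1 imageI)
  next
    case False
    then have "y' \<in> hamming_ball q n x r" using dist y' by (simp add: hamming_ball_def)
    then have "y \<in> (#) b ` hamming_ball q n x r" unfolding yy by (rule imageI)
    then show ?thesis using False b by (intro UnI2 UN_I[of b]) simp_all
  qed
qed

lemma card_hamming_ball_le:
  "x \<in> words q n \<Longrightarrow> card (hamming_ball q n x r) \<le> V n r q"
proof (induction n arbitrary: x r)
  case 0
  have "card (hamming_ball q 0 x r) \<le> card (words q 0)"
    by (rule card_mono[OF finite_words]) (auto simp: hamming_ball_def)
  then show ?case by (simp add: card_words)
next
  case (Suc n)
  show ?case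
  proof (cases r)
    case 0
    then show ?thesis using card_mono[OF _ hamming_ball_0[OF Suc.prems]] by simp
  next
    case (Suc r')
    obtain a x' where x: "x = a # x'" "a < q" "x' \<in> words q n"
      using Suc.prems by (cases x) (auto simp: words_def)
    have image_le: "card ((#) b ` hamming_ball q n x' s) \<le> V n s q" for b s
      using card_image_le[OF finite_hamming_ball] Suc.IH[OF x(3)] le_trans by blast
    have "card (hamming_ball q (Suc n) x r)
        \<le> card ((#) a ` hamming_ball q n x' r) + card (\<Union>b\<in>{..<q} - {a}. (#) b ` hamming_ball q n x' r')"
      unfolding x(1) Suc
      by (rule le_trans[OF card_mono[OF _ hamming_ball_Cons_subset] card_Un_le])
        (auto intro: finite_hamming_ball)
    also have "\<dots> \<le> V n r q + (\<Sum>b\<in>{..<q} - {a}. card ((#) b ` hamming_ball q n x' r'))"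
      using image_le by (intro add_mono card_UN_le) auto
    also have "\<dots> \<le> V n r q + (\<Sum>b\<in>{..<q} - {a}. V n r' q)"
      using image_le by (intro add_mono sum_mono) auto
    also have "\<dots> = V (Suc n) r q"
      using x(2) Suc by (simp add: V_Suc_Suc)
    finally show ?thesis .
  qed
qed

lemma gilbert_varshamov:
  obtains F where "F \<subseteq> words q n" "\<forall>x\<in>F. \<forall>y\<in>F. x \<noteq> y \<longrightarrow> r < hamming x y"
    "q ^ n \<le> card F * V n r q"
proof -
  define packing where
    "packing F \<longleftrightarrow> F \<subseteq> words q n \<and> (\<forall>x\<in>F. \<forall>y\<in>F. x \<noteq> y \<longrightarrow> r < hamming x y)" for F
  have bounded: "\<forall>F. packing F \<longrightarrow> card F < q ^ n + 1"
  proof (intro allI impI)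
    fix F assume "packing F"
    then have "F \<subseteq> words q n" by (simp add: packing_def)
    then have "card F \<le> card (words q n)" by (rule card_mono[OF finite_words])
    then show "card F < q ^ n + 1" by (simp add: card_words)
  qed
  have "packing {}" by (simp add: packing_def)
  from Lattices_Big.ex_has_greatest_nat[OF this bounded]
  obtain F where F: "packing F" and maximal: "\<And>G. packing G \<Longrightarrow> card G \<le> card F"
    by blast
  have finite: "finite F" using F by (auto simp: packing_def intro: finite_subset[OF _ finite_words])
  have cover: "words q n \<subseteq> (\<Union>x\<in>F. hamming_ball q n x r)"
  proof
    fix y assume y: "y \<in> words q n"
    show "y \<in> (\<Union>x\<in>F. hamming_ball q n x r)"
    proof (rule ccontr)
      assume "y \<notin> (\<Union>x\<in>F. hamming_ball q n x r)"
      then have far: "\<forall>x\<in>F. r < hamming x y" using y by (auto simp: hamming_ball_def)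
      then have "y \<notin> F" by (metis hamming_self not_less0)
      moreover have "packing (insert y F)"
        unfolding packing_def
      proof (intro conjI ballI impI)
        show "insert y F \<subseteq> words q n" using F y by (simp add: packing_def)
        fix x z assume "x \<in> insert y F" "z \<in> insert y F" "x \<noteq> z"
        then show "r < hamming x z"
          using F far by (auto simp: packing_def hamming_sym[of y])
      qed
      ultimately show False using maximal[of "insert y F"] finite by (simp add: card_insert_disjoint)
    qed
  qed
  have "q ^ n \<le> card (\<Union>x\<in>F. hamming_ball q n x r)"
    unfolding card_words[symmetric]
    by (rule card_mono[OF _ cover]) (simp add: finite finite_hamming_ball)
  also have "\<dots> \<le> (\<Sum>x\<in>F. card (hamming_ball q n x r))"
    by (rule card_UN_le[OF finite])
  also have "\<dots> \<le> (\<Sum>x\<in>F. V n r q)"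
    using F by (intro sum_mono card_hamming_ball_le) (auto simp: packing_def)
  also have "\<dots> = card F * V n r q" by simp
  finally show ?thesis using F by (intro that) (simp_all add: packing_def)
qed

definition code_rate :: "nat \<Rightarrow> nat \<Rightarrow> nat list set \<Rightarrow> real" where
  "code_rate q n F = log (real q) (real (card F)) / real n"

lemma C0_eq_SUP_code_rate:
  "C0 q w d = (SUP n\<in>{1..}. SUP F\<in>{F. F \<noteq> {} \<and> zero_error_code q w d n F}. code_rate q n F)"
  by (simp add: C0_def code_rate_def)

lemma log_le_of_le_power:
  assumes "q \<ge> 2" "1 \<le> k" "k \<le> q ^ c"
  shows "log (real q) (real k) \<le> real c"
proof -
  have "log (real q) (real k) \<le> log (real q) (real q ^ c)"
    using assms by (subst log_le_cancel_iff) (auto simp flip: of_nat_power)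
  then show ?thesis using assms(1) by (simp add: log_nat_power)
qed

lemma code_rate_le_1:
  assumes "q \<ge> 2" "n \<ge> 1" "zero_error_code q w d n F" "F \<noteq> {}"
  shows "code_rate q n F \<le> 1"
proof -
  have "log (real q) (real (card F)) \<le> real n"
    using zero_error_code_card_bounds[OF assms(3,4)] by (rule log_le_of_le_power[OF assms(1)])
  then show ?thesis using assms(2) by (simp add: code_rate_def)
qed

lemma code_rate_le_1_minus_window_ratio:
  assumes "0 < w" "d \<le> w" "q \<ge> 2" "n \<ge> 1" and F: "zero_error_code q w d n F" "F \<noteq> {}"
  shows "code_rate q n F \<le> 1 - real d / real w"
proof -
  define c where "c = card {t. t < n \<and> d \<le> t mod w}"
  have "1 \<le> card F" by (rule zero_error_code_card_bounds(1)[OF F])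
  moreover have "card F \<le> q ^ c"
    unfolding c_def using F(1) assms(3) by (intro zero_error_code_card_le) simp_all
  ultimately have log_le: "log (real q) (real (card F)) \<le> real c"
    by (rule log_le_of_le_power[OF assms(3)])
  have count: "real c * real w \<le> real n * (real w - real d)"
    using card_mod_ge_mult_le[OF assms(1,2), of n] assms(2) unfolding c_def
    by (metis of_nat_diff of_nat_le_iff of_nat_mult)
  have "code_rate q n F \<le> real c / real n"
    using log_le by (simp add: code_rate_def divide_right_mono)
  also have "\<dots> \<le> (real w - real d) / real w"
    using count assms(1,4) by (simp add: divide_simps mult.commute)
  also have "\<dots> = 1 - real d / real w"
    using assms(1) by (simp add: diff_divide_distrib)
  finally show ?thesis .
qed

lemma zero_error_code_gilbert_varshamov:
  assumes "q \<ge> 2" "w \<ge> 1"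
  obtains F where "zero_error_code q w d w F" "F \<noteq> {}"
    "1 - log (real q) (real (V w (2 * d) q)) / real w \<le> code_rate q w F"
proof -
  obtain F where F: "F \<subseteq> words q w" "\<forall>x\<in>F. \<forall>y\<in>F. x \<noteq> y \<longrightarrow> 2 * d < hamming x y"
    and covering: "q ^ w \<le> card F * V w (2 * d) q"
    by (rule gilbert_varshamov)
  have V: "1 \<le> V w (2 * d) q"
    unfolding V_altdef by (rule order_trans[OF _ member_le_sum[of 0]]) auto
  have card: "0 < card F"
    using covering assms(1) by (cases "card F") auto
  have "real q ^ w \<le> real (card F) * real (V w (2 * d) q)"
    using covering by (metis of_nat_le_iff of_nat_mult of_nat_power)
  then have "log (real q) (real q ^ w) \<le> log (real q) (real (card F) * real (V w (2 * d) q))"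
    using assms(1) V card by (subst log_le_cancel_iff) auto
  then have "real w - log (real q) (real (V w (2 * d) q)) \<le> log (real q) (real (card F))"
    using assms(1) V card by (simp add: log_mult log_nat_power)
  then have "(real w - log (real q) (real (V w (2 * d) q))) / real w \<le> code_rate q w F"
    unfolding code_rate_def by (intro divide_right_mono) auto
  then have "1 - log (real q) (real (V w (2 * d) q)) / real w \<le> code_rate q w F"
    using assms(2) by (simp add: diff_divide_distrib)
  moreover have "F \<noteq> {}" using card by auto
  ultimately show ?thesis using that zero_error_code_if_min_distance[OF F] by blast
qed

lemma C0_leI:
  assumes "q \<ge> 1"
    and "\<And>n F. n \<ge> 1 \<Longrightarrow> zero_error_code q w d n F \<Longrightarrow> F \<noteq> {} \<Longrightarrow> code_rate q n F \<le> c"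
  shows "C0 q w d \<le> c"
  unfolding C0_eq_SUP_code_rate
proof (rule cSUP_least)
  fix n :: nat assume "n \<in> {1..}"
  moreover have "{F. F \<noteq> {} \<and> zero_error_code q w d n F} \<noteq> {}"
    using singleton_zero_error_code[OF assms(1)] by blast
  ultimately show "(SUP F\<in>{F. F \<noteq> {} \<and> zero_error_code q w d n F}. code_rate q n F) \<le> c"
    using assms(2) by (intro cSUP_least) auto
qed simp

lemma code_rate_le_C0:
  assumes "q \<ge> 2" "n \<ge> 1" "zero_error_code q w d n F" "F \<noteq> {}"
  shows "code_rate q n F \<le> C0 q w d"
proof -
  let ?codes = "\<lambda>m. {G. G \<noteq> {} \<and> zero_error_code q w d m G}"
  have nonempty: "?codes m \<noteq> {}" for m
    using singleton_zero_error_code[of q w d m] assms(1) by auto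
  have bdd: "bdd_above (code_rate q m ` ?codes m)" if "m \<ge> 1" for m
    using code_rate_le_1[OF assms(1) that] by (intro bdd_aboveI[of _ 1]) auto
  have le_1: "(SUP G\<in>?codes m. code_rate q m G) \<le> 1" if "m \<ge> 1" for m
    using code_rate_le_1[OF assms(1) that] by (intro cSUP_least[OF nonempty]) auto
  have "code_rate q n F \<le> (SUP G\<in>?codes n. code_rate q n G)"
    using assms(3,4) by (intro cSUP_upper bdd[OF assms(2)]) simp
  also have "\<dots> \<le> (SUP m\<in>{1..}. SUP G\<in>?codes m. code_rate q m G)"
    using assms(2) le_1 by (intro cSUP_upper bdd_aboveI[of _ 1]) auto
  finally show ?thesis unfolding C0_eq_SUP_code_rate .
qed

lemma C0_ge_gilbert_varshamov:
  assumes "q \<ge> 2" "w \<ge> 1"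
  shows "1 - log (real q) (real (V w (2 * d) q)) / real w \<le> C0 q w d"
proof -
  obtain F where "zero_error_code q w d w F" "F \<noteq> {}"
    and "1 - log (real q) (real (V w (2 * d) q)) / real w \<le> code_rate q w F"
    using zero_error_code_gilbert_varshamov[OF assms] .
  with code_rate_le_C0[OF assms] show ?thesis by (meson order_trans)
qed

lemma C0_le_1_minus_window_ratio:
  assumes "w \<ge> 1" "d \<le> w" "q \<ge> 2"
  shows "C0 q w d \<le> 1 - real d / real w"
  using assms by (intro C0_leI code_rate_le_1_minus_window_ratio) auto

lemma C0_eq_0_if_half_window:
  assumes "w \<le> 2 * d" "q \<ge> 2"
  shows "C0 q w d = 0"
proof (rule antisym)
  have q: "q \<ge> 1" using assms(2) by simp
  show "C0 q w d \<le> 0"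
  proof (rule C0_leI[OF q])
    fix n F assume "zero_error_code q w d n F" "F \<noteq> {}"
    with zero_error_code_card_le_1[OF _ q assms(1)] zero_error_code_card_bounds(1)
    have "card F = 1" by (meson le_antisym)
    then show "code_rate q n F \<le> 0" by (simp add: code_rate_def)
  qed
  show "0 \<le> C0 q w d"
    using code_rate_le_C0[OF assms(2) _ singleton_zero_error_code[OF q], of 1 w d]
    by (simp add: code_rate_def)
qed

theorem theorem7:
  fixes q w d :: nat
  assumes "w \<ge> 1" and "d \<le> w" and "q \<ge> 2"
  shows "1 - log (real q) (real (V w (2 * d) q)) / real w \<le> C0 q w d
       \<and> C0 q w d \<le> 1 - real d / real w * log (real q) (real q - 1)
       \<and> (real d \<ge> real w / 2 \<longrightarrow> C0 q w d = 0)"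
proof (intro conjI impI)
  show "1 - log (real q) (real (V w (2 * d) q)) / real w \<le> C0 q w d"
    using C0_ge_gilbert_varshamov[OF assms(3,1)] .
  have "log (real q) (real q - 1) \<le> 1"
    using assms(3) by simp
  then have "1 - real d / real w \<le> 1 - real d / real w * log (real q) (real q - 1)"
    using mult_left_le[of "log (real q) (real q - 1)" "real d / real w"] by simp
  with C0_le_1_minus_window_ratio[OF assms]
  show "C0 q w d \<le> 1 - real d / real w * log (real q) (real q - 1)" by linarith
next
  assume "real w / 2 \<le> real d"
  then have "w \<le> 2 * d" by linarith
  then show "C0 q w d = 0" by (rule C0_eq_0_if_half_window[OF _ assms(3)])
qed

end
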